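(* InpRS achieves $\epsilon$-LDP and guarantees that $\| \mathcal{C}^\beta(t)- {\mathcal{C}^{\beta}(t^* )}\|_1 = \tilde{O}\Big(\frac{2^{(d+k)/2}}{\epsilon\sqrt{N}}\Big)$ with constant probability.
   Context: There are $N$ users; user $i$ holds a vector in $\{0,1\}^d$, represented as an indicator vector $t_i\in\{0,1\}^{2^d}$ with a single 1 at index $j_i$, and $t=\sum_{i=1}^N t_i/N$ is the full (normalized) distribution. A mechanism $F$ is $\epsilon$-LDP if for all pairs of such indicator inputs $t_i,t'_i$ and every output $R$, $\Pr[F(t_i)=R]\le e^{\epsilon}\Pr[F(t'_i)=R]$. For $\beta\in\{0,1\}^d$ with $k$ ones, the $k$-way marginal operator is $\mathcal{C}^\beta(t)[\gamma]=\sum_{\eta:\eta\wedge\beta=\gamma} t[\eta]$ for $\gamma$ ranging over the $2^k$ values with support inside $\beta$. The algorithm InpRS (parallel randomized response on input): each user $i$ perturbs its value $t_i[\ell]$ at every index $\ell\in[2^d]$ independently using randomized response with privacy parameter $\epsilon/2$ (report the true bit with probability $p_r=e^{\epsilon/2}/(1+e^{\epsilon/2})$, otherwise the flipped bit) and releases all pairs $\langle \ell, b^*_{i,\ell}\rangle$. The aggregator debiases each report to an unbiased estimate (observed fraction $F$ mapped to $(F+p_r-1)/(2p_r-1)$), averages over users to obtain a reconstructed distribution $t^*$, and answers marginal $\beta$ by $\mathcal{C}^\beta(t^* )$. $\tilde{O}$ suppresses factors logarithmic in $N,d,k,\epsilon$; the number of users is assumed large relative to the number of cells, i.e. $N$ at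 least (up to log factors) proportional to $2^d$, and $\epsilon$ is bounded by a constant (the proof uses $0<\epsilon<2$). *)

theory Defs
  imports "HOL-Probability.Probability"
begin

(* A value in {0,1}^d is encoded by its support set eta \<subseteq> {..<d};
   the 2^d cells of the indicator vector are indexed by Pow {..<d}. *)

definition rr_prob :: "real \<Rightarrow> real" where
  "rr_prob e = exp e / (1 + exp e)"

definition rand_resp :: "real \<Rightarrow> bool \<Rightarrow> bool pmf" where
  "rand_resp e b = map_pmf (\<lambda>c. if c then b else \<not> b) (bernoulli_pmf (rr_prob e))"

(* InpRS local randomizer: the user holding cell v perturbs every coordinate t_i[l]
   (the indicator bit [l = v]) independently with RR at parameter eps/2;
   the output assigns to each cell l its reported bit. *)
definition inprs_local :: "nat \<Rightarrow> real \<Rightarrow> nat set \<Rightarrow> (nat set \<Rightarrow> bool) pmf" where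
  "inprs_local d eps v = Pi_pmf (Pow {..<d}) False (\<lambda>l. rand_resp (eps / 2) (l = v))"

definition eps_LDP :: "real \<Rightarrow> 'a set \<Rightarrow> ('a \<Rightarrow> 'b pmf) \<Rightarrow> bool" where
  "eps_LDP eps D M \<longleftrightarrow> (\<forall>u\<in>D. \<forall>v\<in>D. \<forall>R. pmf (M u) R \<le> exp eps * pmf (M v) R)"

definition full_dist :: "nat \<Rightarrow> (nat \<Rightarrow> nat set) \<Rightarrow> nat set \<Rightarrow> real" where
  "full_dist N x eta = real (card {i. i < N \<and> x i = eta}) / real N"

definition inprs_reports :: "nat \<Rightarrow> real \<Rightarrow> nat \<Rightarrow> (nat \<Rightarrow> nat set) \<Rightarrow> (nat \<Rightarrow> nat set \<Rightarrow> bool) pmf" where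
  "inprs_reports d eps N x = Pi_pmf {..<N} (\<lambda>_. False) (\<lambda>i. inprs_local d eps (x i))"

(* aggregator: debiased average of the reports, the reconstructed distribution t^* *)
definition inprs_recon :: "real \<Rightarrow> nat \<Rightarrow> (nat \<Rightarrow> nat set \<Rightarrow> bool) \<Rightarrow> nat set \<Rightarrow> real" where
  "inprs_recon eps N R l =
     (let p = rr_prob (eps / 2); F = real (card {i. i < N \<and> R i l}) / real N
      in (F + p - 1) / (2 * p - 1))"

definition marginal :: "nat \<Rightarrow> nat set \<Rightarrow> (nat set \<Rightarrow> real) \<Rightarrow> nat set \<Rightarrow> real" where
  "marginal d beta t gamma = (\<Sum>eta \<in> {eta \<in> Pow {..<d}. eta \<inter> beta = gamma}. t eta)"

definition marg_l1 :: "nat set \<Rightarrow> (nat set \<Rightarrow> real) \<Rightarrow> (nat set \<Rightarrow> real) \<Rightarrow> real" where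
  "marg_l1 beta f g = (\<Sum>gamma \<in> Pow beta. \<bar>f gamma - g gamma\<bar>)"

(* polylogarithmic slack factor allowed by O-tilde *)
definition logfac :: "nat \<Rightarrow> nat \<Rightarrow> nat \<Rightarrow> real \<Rightarrow> real" where
  "logfac N d k eps = ln (3 + real N + real d + real k + 1 / eps)"

end

(*
  The two output distributions of a user with values u and v are products over the cells that
  differ only in the factors for the cells u and v, each changing by at most e^(eps/2); this gives
  eps-LDP.

  For accuracy, write q = rr_prob (eps/2). A reported bit for cell l has mean
  (1 - q) + (2q - 1)[l = v], so after debiasing the error of a cell of t^* is a sum of
  independent centred bits divided by N(2q - 1). A cell of a k-way marginal aggregates at most
  2^(d-k) cells of t^*, so its error has second moment at most N 2^(d-k) q(1-q) / (N(2q-1))^2,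
  which is at most 16 2^(d-k) / (eps^2 N) because eps < 2. Bounding the first moment by the
  root of the second and summing over the 2^k marginal cells, the expected L1 error is at most
  4 2^((d+k)/2) / (eps sqrt N); Markov's inequality then gives the claim with C = 4/delta and
  no logarithmic factor.
*)

theory Submission
  imports Defs
begin

subsection \<open>Randomized response and local differential privacy\<close>

lemma rr_prob_bounds: "0 < rr_prob e" "rr_prob e < 1"
  unfolding rr_prob_def by (auto simp: field_simps add_pos_pos)

lemma rr_prob_gt_half:
  assumes "0 < e"
  shows "1 / 2 < rr_prob e"
proof -
  have "1 < exp e" "0 < 1 + exp e" using assms by (simp_all add: add_pos_pos)
  thus ?thesis unfolding rr_prob_def by (simp add: field_simps)
qed

lemma rr_prob_eq_exp_mult: "rr_prob e = exp e * (1 - rr_prob e)"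
proof -
  have "1 + exp e \<noteq> 0" using exp_gt_zero[of e] by linarith
  thus ?thesis unfolding rr_prob_def by (simp add: field_simps)
qed

lemma pmf_rand_resp: "pmf (rand_resp e b) c = (if c = b then rr_prob e else 1 - rr_prob e)"
proof -
  define f where "f = (\<lambda>c'. if c' then b else \<not> b)"
  have "inj f" unfolding f_def by (auto simp: inj_def split: if_splits)
  have "pmf (rand_resp e b) c = pmf (map_pmf f (bernoulli_pmf (rr_prob e))) (f (c = b))"
    unfolding rand_resp_def f_def by auto
  also have "\<dots> = pmf (bernoulli_pmf (rr_prob e)) (c = b)" by (rule pmf_map_inj') fact
  finally show ?thesis using rr_prob_bounds[of e] by (cases "c = b") auto
qed

lemma pmf_rand_resp_le_exp_mult:
  assumes "0 \<le> e"
  shows "pmf (rand_resp e b) c \<le> exp e * pmf (rand_resp e b') c"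
proof -
  have "1 - rr_prob e \<le> exp e * (1 - rr_prob e)"
    using mult_right_mono[of 1 "exp e" "1 - rr_prob e"] rr_prob_bounds[of e] assms by simp
  hence less_likely: "1 - rr_prob e \<le> rr_prob e" using rr_prob_eq_exp_mult[of e] by simp
  have "pmf (rand_resp e b) c \<le> rr_prob e" using less_likely by (simp add: pmf_rand_resp)
  also have "\<dots> = exp e * (1 - rr_prob e)" by (rule rr_prob_eq_exp_mult)
  also have "\<dots> \<le> exp e * pmf (rand_resp e b') c" using less_likely by (simp add: pmf_rand_resp)
  finally show ?thesis .
qed

lemma pmf_Pi_pmf_le_prod_mult:
  fixes c :: "'a \<Rightarrow> real"
  assumes "finite A" and "\<And>x. x \<in> A \<Longrightarrow> 0 \<le> c x"
    and "\<And>x. x \<in> A \<Longrightarrow> pmf (p x) (f x) \<le> c x * pmf (q x) (f x)"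
  shows "pmf (Pi_pmf A dflt p) f \<le> (\<Prod>x\<in>A. c x) * pmf (Pi_pmf A dflt q) f"
proof (cases "\<forall>x. x \<notin> A \<longrightarrow> f x = dflt")
  case True
  have "(\<Prod>x\<in>A. pmf (p x) (f x)) \<le> (\<Prod>x\<in>A. c x * pmf (q x) (f x))"
    using assms(3) by (intro prod_mono) auto
  also have "\<dots> = (\<Prod>x\<in>A. c x) * (\<Prod>x\<in>A. pmf (q x) (f x))" by (rule prod.distrib)
  finally show ?thesis using True by (simp add: pmf_Pi[OF assms(1)])
next
  case False
  thus ?thesis by (auto simp: pmf_Pi[OF assms(1)])
qed

theorem inprs_local_eps_LDP:
  assumes "0 < eps"
  shows "eps_LDP eps (Pow {..<d}) (inprs_local d eps)"
  unfolding eps_LDP_def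
proof (intro ballI allI)
  fix u v R
  let ?A = "Pow {..<d} :: nat set set"
  define c where "c l = (if l \<in> {u, v} then exp (eps / 2) else 1)" for l :: "nat set"
  have "(\<Prod>l\<in>?A. c l) = exp (eps / 2) ^ card (?A \<inter> {u, v})"
    unfolding c_def
    by (simp only: prod.If_cases finite_Pow_iff finite_lessThan prod_constant Collect_mem_eq
        power_one mult_1_right)
  also have "\<dots> \<le> exp (eps / 2) ^ 2"
  proof (rule power_increasing)
    have "card (?A \<inter> {u, v}) \<le> card {u, v}" by (rule card_mono) auto
    also have "\<dots> \<le> 2" by (simp add: card_insert_if)
    finally show "card (?A \<inter> {u, v}) \<le> 2" .
  qed (use assms in simp)
  also have "\<dots> = exp eps" by (simp add: power2_eq_square exp_add[symmetric])
  finally have prod_c: "(\<Prod>l\<in>?A. c l) \<le> exp eps" .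
  have "pmf (inprs_local d eps u) R \<le> (\<Prod>l\<in>?A. c l) * pmf (inprs_local d eps v) R"
    unfolding inprs_local_def
    using assms by (intro pmf_Pi_pmf_le_prod_mult) (auto simp: c_def pmf_rand_resp_le_exp_mult)
  also have "\<dots> \<le> exp eps * pmf (inprs_local d eps v) R" by (intro mult_right_mono prod_c) simp
  finally show "pmf (inprs_local d eps u) R \<le> exp eps * pmf (inprs_local d eps v) R" .
qed

subsection \<open>Second moments under product distributions\<close>

lemma finite_set_Pi_pmf:
  assumes "finite A" and "\<And>x. x \<in> A \<Longrightarrow> finite (set_pmf (p x))"
  shows "finite (set_pmf (Pi_pmf A dflt p))"
  using assms by (subst set_Pi_pmf) (auto intro!: finite_PiE_dflt)

lemma expectation_Pi_pmf_component:
  fixes h :: "'b \<Rightarrow> real"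
  assumes "finite A" and "x \<in> A"
  shows "measure_pmf.expectation (Pi_pmf A dflt p) (\<lambda>y. h (y x)) = measure_pmf.expectation (p x) h"
proof -
  have "measure_pmf.expectation (Pi_pmf A dflt p) (\<lambda>y. h (y x)) =
        measure_pmf.expectation (map_pmf (\<lambda>y. y x) (Pi_pmf A dflt p)) h" by simp
  also have "map_pmf (\<lambda>y. y x) (Pi_pmf A dflt p) = p x" using assms by (simp add: Pi_pmf_component)
  finally show ?thesis .
qed

lemma expectation_Pi_pmf_mult_components:
  fixes g :: "'a \<Rightarrow> 'b \<Rightarrow> real"
  assumes fin: "finite A" and fin_set: "\<And>x. x \<in> A \<Longrightarrow> finite (set_pmf (p x))"
    and "x \<in> A" "z \<in> A" "x \<noteq> z"
  shows "measure_pmf.expectation (Pi_pmf A dflt p) (\<lambda>y. g x (y x) * g z (y z)) =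
         measure_pmf.expectation (p x) (g x) * measure_pmf.expectation (p z) (g z)"
proof -
  let ?M = "Pi_pmf A dflt p"
  have fin_M: "finite (set_pmf ?M)" by (rule finite_set_Pi_pmf[OF fin fin_set])
  note prob_M = measure_pmf.prob_space_axioms[of ?M]
  have "prob_space.indep_vars ?M (\<lambda>_. count_space UNIV) (\<lambda>i f. f i) {x, z}"
    using assms by (intro prob_space.indep_vars_subset[OF prob_M indep_vars_Pi_pmf[OF fin]]) auto
  hence indep: "prob_space.indep_vars ?M (\<lambda>_. borel) (\<lambda>i f. g i (f i)) {x, z}"
    by (rule prob_space.indep_vars_compose2[OF prob_M]) auto
  have "measure_pmf.expectation ?M (\<lambda>y. \<Prod>i\<in>{x, z}. g i (y i)) =
        (\<Prod>i\<in>{x, z}. measure_pmf.expectation ?M (\<lambda>y. g i (y i)))"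
    by (rule prob_space.indep_vars_lebesgue_integral[OF prob_M _ indep])
       (auto intro: integrable_measure_pmf_finite[OF fin_M])
  thus ?thesis using assms by (simp add: expectation_Pi_pmf_component)
qed

lemma expectation_Pi_pmf_sum_components:
  fixes g :: "'a \<Rightarrow> 'b \<Rightarrow> real"
  assumes fin: "finite A" and fin_set: "\<And>x. x \<in> A \<Longrightarrow> finite (set_pmf (p x))" and "S \<subseteq> A"
  shows "measure_pmf.expectation (Pi_pmf A dflt p) (\<lambda>y. \<Sum>x\<in>S. g x (y x)) =
         (\<Sum>x\<in>S. measure_pmf.expectation (p x) (g x))"
proof -
  have "finite (set_pmf (Pi_pmf A dflt p))" by (rule finite_set_Pi_pmf[OF fin fin_set])
  hence "measure_pmf.expectation (Pi_pmf A dflt p) (\<lambda>y. \<Sum>x\<in>S. g x (y x)) =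
         (\<Sum>x\<in>S. measure_pmf.expectation (Pi_pmf A dflt p) (\<lambda>y. g x (y x)))"
    by (intro Bochner_Integration.integral_sum integrable_measure_pmf_finite)
  also have "\<dots> = (\<Sum>x\<in>S. measure_pmf.expectation (p x) (g x))"
    using assms by (intro sum.cong refl expectation_Pi_pmf_component) auto
  finally show ?thesis .
qed

lemma expectation_Pi_pmf_sum_square:
  fixes g :: "'a \<Rightarrow> 'b \<Rightarrow> real"
  assumes fin: "finite A" and fin_set: "\<And>x. x \<in> A \<Longrightarrow> finite (set_pmf (p x))" and S: "S \<subseteq> A"
    and centred: "\<And>x. x \<in> S \<Longrightarrow> measure_pmf.expectation (p x) (g x) = 0"
  shows "measure_pmf.expectation (Pi_pmf A dflt p) (\<lambda>y. (\<Sum>x\<in>S. g x (y x))\<^sup>2) =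
         (\<Sum>x\<in>S. measure_pmf.expectation (p x) (\<lambda>v. (g x v)\<^sup>2))"
proof -
  let ?M = "Pi_pmf A dflt p"
  have fin_S: "finite S" using S fin by (rule finite_subset)
  have "finite (set_pmf ?M)" by (rule finite_set_Pi_pmf[OF fin fin_set])
  hence "measure_pmf.expectation ?M (\<lambda>y. (\<Sum>x\<in>S. g x (y x))\<^sup>2) =
         (\<Sum>x\<in>S. \<Sum>z\<in>S. measure_pmf.expectation ?M (\<lambda>y. g x (y x) * g z (y z)))"
    by (simp add: power2_eq_square sum_product Bochner_Integration.integral_sum
        integrable_measure_pmf_finite)
  also have "\<dots> = (\<Sum>x\<in>S. \<Sum>z\<in>S. if z = x then measure_pmf.expectation (p x) (\<lambda>v. (g x v)\<^sup>2) else 0)"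
  proof (intro sum.cong refl)
    fix x z assume "x \<in> S" "z \<in> S"
    thus "measure_pmf.expectation ?M (\<lambda>y. g x (y x) * g z (y z)) =
          (if z = x then measure_pmf.expectation (p x) (\<lambda>v. (g x v)\<^sup>2) else 0)"
      using S centred expectation_Pi_pmf_mult_components[where x=x and z=z and g=g and dflt=dflt and p=p, OF fin fin_set]
        expectation_Pi_pmf_component[OF fin, where x=x and h="\<lambda>v. (g x v)\<^sup>2" and dflt=dflt and p=p]
      by (auto simp: power2_eq_square)
  qed
  also have "\<dots> = (\<Sum>x\<in>S. measure_pmf.expectation (p x) (\<lambda>v. (g x v)\<^sup>2))"
    using fin_S by (simp add: sum.delta)
  finally show ?thesis .
qed

subsection \<open>Accuracy of the reconstructed marginals\<close>

definition rr_mean :: "real \<Rightarrow> bool \<Rightarrow> real" where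
  "rr_mean e b = (if b then rr_prob e else 1 - rr_prob e)"

lemma rr_mean_affine: "rr_mean e b = (2 * rr_prob e - 1) * of_bool b + (1 - rr_prob e)"
  unfolding rr_mean_def by simp

lemma expectation_bool_pmf:
  "measure_pmf.expectation (p :: bool pmf) f = f True * pmf p True + f False * pmf p False"
  by (subst integral_measure_pmf_real[of UNIV]) (auto simp: UNIV_bool)

lemma expectation_rand_resp_centred:
  "measure_pmf.expectation (rand_resp e b) (\<lambda>c. of_bool c - rr_mean e b) = 0"
  by (cases b) (simp_all add: expectation_bool_pmf pmf_rand_resp rr_mean_def algebra_simps)

lemma expectation_rand_resp_centred_square:
  "measure_pmf.expectation (rand_resp e b) (\<lambda>c. (of_bool c - rr_mean e b)\<^sup>2) =
   rr_prob e * (1 - rr_prob e)"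
  by (cases b) (simp_all add: expectation_bool_pmf pmf_rand_resp rr_mean_def power2_eq_square
      algebra_simps)

lemma finite_set_inprs_local: "finite (set_pmf (inprs_local d eps v))"
  unfolding inprs_local_def by (rule finite_set_Pi_pmf) auto

lemma finite_set_inprs_reports: "finite (set_pmf (inprs_reports d eps N x))"
  unfolding inprs_reports_def by (intro finite_set_Pi_pmf finite_set_inprs_local) auto

lemma expectation_inprs_local_noise_square:
  assumes "S \<subseteq> Pow {..<d}"
  shows "measure_pmf.expectation (inprs_local d eps v)
           (\<lambda>r. (\<Sum>l\<in>S. of_bool (r l) - rr_mean (eps / 2) (l = v))\<^sup>2) =
         card S * (rr_prob (eps / 2) * (1 - rr_prob (eps / 2)))"
  unfolding inprs_local_def
  using assms by (subst expectation_Pi_pmf_sum_square)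
    (simp_all add: expectation_rand_resp_centred expectation_rand_resp_centred_square)

lemma expectation_inprs_reports_noise_square:
  assumes "S \<subseteq> Pow {..<d}"
  shows "measure_pmf.expectation (inprs_reports d eps N x)
           (\<lambda>R. (\<Sum>i<N. \<Sum>l\<in>S. of_bool (R i l) - rr_mean (eps / 2) (l = x i))\<^sup>2) =
         N * card S * (rr_prob (eps / 2) * (1 - rr_prob (eps / 2)))"
proof -
  have centred: "measure_pmf.expectation (inprs_local d eps v)
      (\<lambda>r. \<Sum>l\<in>S. of_bool (r l) - rr_mean (eps / 2) (l = v)) = 0" for v
    unfolding inprs_local_def
    using assms by (subst expectation_Pi_pmf_sum_components) (simp_all add: expectation_rand_resp_centred)
  show ?thesis
    unfolding inprs_reports_def
    using assms by (subst expectation_Pi_pmf_sum_square)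
      (simp_all add: finite_set_inprs_local centred expectation_inprs_local_noise_square)
qed

lemma inprs_recon_minus_full_dist:
  assumes "1 \<le> N" and "0 < eps"
  shows "inprs_recon eps N R l - full_dist N x l =
         (\<Sum>i<N. of_bool (R i l) - rr_mean (eps / 2) (l = x i)) / (N * (2 * rr_prob (eps / 2) - 1))"
proof -
  define q where "q = rr_prob (eps / 2)"
  define a where "a = (\<Sum>i<N. of_bool (R i l) :: real)"
  define c where "c = (\<Sum>i<N. of_bool (l = x i) :: real)"
  have "{i. i < N \<and> R i l} = {..<N} \<inter> {i. R i l}" by auto
  hence card_R: "real (card {i. i < N \<and> R i l}) = a" unfolding a_def by simp
  have "{i. i < N \<and> x i = l} = {..<N} \<inter> {i. l = x i}" by auto
  hence card_x: "real (card {i. i < N \<and> x i = l}) = c" unfolding c_def by simp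
  have noise: "(\<Sum>i<N. of_bool (R i l) - rr_mean (eps / 2) (l = x i)) = a - ((2 * q - 1) * c + N * (1 - q))"
    unfolding a_def c_def rr_mean_affine q_def by (simp add: sum_subtractf sum.distrib sum_distrib_left)
  have "2 * q - 1 \<noteq> 0" "real N \<noteq> 0"
    using rr_prob_gt_half[of "eps / 2"] assms unfolding q_def by auto
  thus ?thesis
    unfolding inprs_recon_def full_dist_def Let_def q_def[symmetric] card_R card_x noise
    by (simp add: field_simps)
qed

lemma marginal_error_eq:
  assumes "1 \<le> N" and "0 < eps"
  shows "marginal d beta (full_dist N x) gamma - marginal d beta (inprs_recon eps N R) gamma =
         - (\<Sum>i<N. \<Sum>l\<in>{eta \<in> Pow {..<d}. eta \<inter> beta = gamma}.
              of_bool (R i l) - rr_mean (eps / 2) (l = x i)) / (N * (2 * rr_prob (eps / 2) - 1))"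
proof -
  define S where "S = {eta \<in> Pow {..<d}. eta \<inter> beta = gamma}"
  define K where "K = real N * (2 * rr_prob (eps / 2) - 1)"
  have "marginal d beta (full_dist N x) gamma - marginal d beta (inprs_recon eps N R) gamma =
        - (\<Sum>l\<in>S. inprs_recon eps N R l - full_dist N x l)"
    unfolding marginal_def S_def[symmetric] by (simp add: sum_subtractf)
  also have "\<dots> = - (\<Sum>l\<in>S. (\<Sum>i<N. of_bool (R i l) - rr_mean (eps / 2) (l = x i)) / K)"
    unfolding K_def by (simp add: inprs_recon_minus_full_dist[OF assms])
  also have "\<dots> = - (\<Sum>i<N. \<Sum>l\<in>S. of_bool (R i l) - rr_mean (eps / 2) (l = x i)) / K"
    by (simp add: sum_divide_distrib[symmetric] sum.swap[of _ S])
  finally show ?thesis unfolding S_def K_def .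
qed

lemma card_marginal_cell_le:
  assumes "finite U" and "beta \<subseteq> U"
  shows "card {eta \<in> Pow U. eta \<inter> beta = gamma} \<le> 2 ^ (card U - card beta)"
proof -
  have "inj_on (\<lambda>eta. eta - beta) {eta \<in> Pow U. eta \<inter> beta = gamma}"
  proof (rule inj_onI)
    fix a b assume "a \<in> {eta \<in> Pow U. eta \<inter> beta = gamma}" "b \<in> {eta \<in> Pow U. eta \<inter> beta = gamma}"
      and "a - beta = b - beta"
    hence "(a - beta) \<union> (a \<inter> beta) = (b - beta) \<union> (b \<inter> beta)" by auto
    thus "a = b" by auto
  qed
  hence "card {eta \<in> Pow U. eta \<inter> beta = gamma} \<le> card (Pow (U - beta))"
    using assms(1) by (intro card_inj_on_le) auto
  also have "\<dots> = 2 ^ (card U - card beta)"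
    using assms by (simp add: card_Pow card_Diff_subset finite_subset)
  finally show ?thesis .
qed

lemma rr_prob_variance_le:
  assumes "0 < eps" and "eps < 2"
  shows "eps\<^sup>2 * (rr_prob (eps / 2) * (1 - rr_prob (eps / 2))) \<le> 16 * (2 * rr_prob (eps / 2) - 1)\<^sup>2"
proof -
  define y where "y = exp (eps / 2)"
  have y0: "0 < y" unfolding y_def by simp
  have y1: "eps / 2 \<le> y - 1" unfolding y_def using exp_ge_add_one_self[of "eps / 2"] by linarith
  have "y \<le> exp 1" unfolding y_def using assms by simp
  also have "exp 1 \<le> (4::real)" using exp_le by simp
  finally have y4: "y \<le> 4" .
  have q: "rr_prob (eps / 2) = y / (1 + y)" unfolding rr_prob_def y_def ..
  have "eps\<^sup>2 * y \<le> eps\<^sup>2 * 4" using y4 by (intro mult_left_mono) auto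
  also have "\<dots> = 16 * (eps / 2)\<^sup>2" by (simp add: power2_eq_square)
  also have "\<dots> \<le> 16 * (y - 1)\<^sup>2" using y1 assms by (intro mult_left_mono power_mono) auto
  finally have "eps\<^sup>2 * y / (1 + y)\<^sup>2 \<le> 16 * (y - 1)\<^sup>2 / (1 + y)\<^sup>2"
    using y0 by (intro divide_right_mono) auto
  thus ?thesis unfolding q using y0 by (simp add: field_simps power2_eq_square)
qed

lemma expectation_abs_le_of_square_le:
  fixes M :: "'a pmf" and Z :: "'a \<Rightarrow> real"
  assumes fin: "finite (set_pmf M)" and U: "0 < U"
    and square: "measure_pmf.expectation M (\<lambda>w. (Z w)\<^sup>2) \<le> U\<^sup>2"
  shows "measure_pmf.expectation M (\<lambda>w. \<bar>Z w\<bar>) \<le> U"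
proof -
  note int = integrable_measure_pmf_finite[OF fin]
  have am_gm: "\<bar>Z w\<bar> \<le> ((Z w)\<^sup>2 / U + U) / 2" for w
  proof -
    have "0 \<le> (\<bar>Z w\<bar> - U)\<^sup>2" by simp
    thus ?thesis using U by (simp add: field_simps power2_eq_square)
  qed
  have "measure_pmf.expectation M (\<lambda>w. \<bar>Z w\<bar>) \<le> measure_pmf.expectation M (\<lambda>w. ((Z w)\<^sup>2 / U + U) / 2)"
    by (intro integral_mono int am_gm)
  also have "\<dots> = (measure_pmf.expectation M (\<lambda>w. (Z w)\<^sup>2) / U + U) / 2"
    by (simp add: Bochner_Integration.integral_add[OF int int])
  also have "\<dots> \<le> (U\<^sup>2 / U + U) / 2" using square U by (intro divide_right_mono add_right_mono) auto
  also have "\<dots> = U" using U by (simp add: power2_eq_square)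
  finally show ?thesis .
qed

lemma expectation_marginal_cell_error_le:
  assumes N: "1 \<le> N" and eps: "0 < eps" "eps < 2" and beta: "beta \<subseteq> {..<d}"
  shows "measure_pmf.expectation (inprs_reports d eps N x)
     (\<lambda>R. \<bar>marginal d beta (full_dist N x) gamma - marginal d beta (inprs_recon eps N R) gamma\<bar>)
     \<le> 4 * sqrt (2 ^ (d - card beta)) / (eps * sqrt N)"
proof -
  define q where "q = rr_prob (eps / 2)"
  define K where "K = real N * (2 * q - 1)"
  define M :: real where "M = 2 ^ (d - card beta)"
  define U where "U = K * (4 * sqrt M / (eps * sqrt N))"
  define S where "S = {eta \<in> Pow {..<d}. eta \<inter> beta = gamma}"
  define Z where "Z R = (\<Sum>i<N. \<Sum>l\<in>S. of_bool (R i l) - rr_mean (eps / 2) (l = x i))"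
    for R :: "nat \<Rightarrow> nat set \<Rightarrow> bool"
  have q: "1 / 2 < q" unfolding q_def by (rule rr_prob_gt_half) (use eps in simp)
  hence K: "0 < K" and U: "0 < U" unfolding K_def U_def M_def using N eps by auto
  have error_eq: "\<bar>marginal d beta (full_dist N x) gamma - marginal d beta (inprs_recon eps N R) gamma\<bar>
      = \<bar>Z R\<bar> / K" for R
    unfolding marginal_error_eq[OF N eps(1)] Z_def S_def K_def q_def using K K_def q_def by simp
  have "measure_pmf.expectation (inprs_reports d eps N x) (\<lambda>R. (Z R)\<^sup>2) = N * card S * (q * (1 - q))"
    unfolding Z_def q_def by (rule expectation_inprs_reports_noise_square) (auto simp: S_def)
  also have "\<dots> \<le> N * M * (q * (1 - q))"
  proof -
    have "card S \<le> 2 ^ (card {..<d} - card beta)"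
      unfolding S_def by (rule card_marginal_cell_le) (use beta in auto)
    hence "real (card S) \<le> real (2 ^ (d - card beta))" by simp
    hence "real (card S) \<le> M" unfolding M_def by simp
    thus ?thesis using rr_prob_bounds[of "eps / 2"] unfolding q_def
      by (auto intro!: mult_right_mono mult_left_mono)
  qed
  also have "\<dots> \<le> N * M * (16 * (2 * q - 1)\<^sup>2 / eps\<^sup>2)"
    using rr_prob_variance_le[OF eps] eps unfolding q_def M_def
    by (intro mult_left_mono) (simp_all add: field_simps mult.commute)
  also have "\<dots> = U\<^sup>2" unfolding U_def K_def M_def using N eps
    by (simp add: power_mult_distrib power_divide) (simp add: power2_eq_square field_simps)
  finally have "measure_pmf.expectation (inprs_reports d eps N x) (\<lambda>R. \<bar>Z R\<bar>) \<le> U"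
    by (intro expectation_abs_le_of_square_le finite_set_inprs_reports U)
  hence "measure_pmf.expectation (inprs_reports d eps N x) (\<lambda>R. \<bar>Z R\<bar>) / K \<le> U / K"
    using K by (intro divide_right_mono) auto
  also have "U / K = 4 * sqrt M / (eps * sqrt N)"
    unfolding U_def using K by simp
  finally show ?thesis unfolding error_eq M_def by simp
qed

lemma expectation_marginal_l1_error_le:
  assumes N: "1 \<le> N" and eps: "0 < eps" "eps < 2" and beta: "beta \<subseteq> {..<d}"
  shows "measure_pmf.expectation (inprs_reports d eps N x)
     (\<lambda>R. marg_l1 beta (marginal d beta (full_dist N x)) (marginal d beta (inprs_recon eps N R)))
     \<le> 4 * 2 powr ((real d + real (card beta)) / 2) / (eps * sqrt N)"
proof -
  define k where "k = card beta"
  have "finite beta" using beta finite_subset by blast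
  have k: "k \<le> d" unfolding k_def using card_mono[OF _ beta] by simp
  have "measure_pmf.expectation (inprs_reports d eps N x)
     (\<lambda>R. marg_l1 beta (marginal d beta (full_dist N x)) (marginal d beta (inprs_recon eps N R)))
   = (\<Sum>gamma\<in>Pow beta. measure_pmf.expectation (inprs_reports d eps N x)
     (\<lambda>R. \<bar>marginal d beta (full_dist N x) gamma - marginal d beta (inprs_recon eps N R) gamma\<bar>))"
    unfolding marg_l1_def
    by (intro Bochner_Integration.integral_sum integrable_measure_pmf_finite finite_set_inprs_reports)
  also have "\<dots> \<le> (\<Sum>gamma\<in>Pow beta. 4 * sqrt (2 ^ (d - k)) / (eps * sqrt N))"
    unfolding k_def by (intro sum_mono expectation_marginal_cell_error_le[OF N eps beta])
  also have "\<dots> = 4 * (2 ^ k * sqrt (2 ^ (d - k))) / (eps * sqrt N)"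
    using \<open>finite beta\<close> by (simp add: card_Pow k_def)
  also have "2 ^ k * sqrt (2 ^ (d - k)) = 2 powr ((real d + real k) / 2)"
  proof -
    have "2 ^ k * sqrt (2 ^ (d - k)) = 2 powr real k * 2 powr ((real d - real k) / 2)"
      using k by (simp add: powr_realpow[symmetric] powr_half_sqrt[symmetric] powr_powr of_nat_diff)
    also have "\<dots> = 2 powr ((real d + real k) / 2)"
      by (simp add: powr_add[symmetric] field_simps)
    finally show ?thesis .
  qed
  finally show ?thesis unfolding k_def .
qed

lemma Markov_prob_le_lower_bound:
  fixes M :: "'a pmf" and L :: "'a \<Rightarrow> real"
  assumes "finite (set_pmf M)" and "\<And>w. 0 \<le> L w" and "0 < B"
  shows "1 - measure_pmf.expectation M L / B \<le> measure_pmf.prob M {w. L w \<le> B}"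
proof -
  have "measure_pmf.prob M {w \<in> space M. B \<le> L w} \<le> measure_pmf.expectation M L / B"
    by (rule integral_Markov_inequality_measure[where A = "{}"])
      (auto simp: assms integrable_measure_pmf_finite)
  moreover have "measure_pmf.prob M (space M - {w \<in> space M. B \<le> L w}) \<le> measure_pmf.prob M {w. L w \<le> B}"
    by (intro measure_pmf.finite_measure_mono) auto
  moreover have "measure_pmf.prob M (space M - {w \<in> space M. B \<le> L w}) =
      1 - measure_pmf.prob M {w \<in> space M. B \<le> L w}"
    by (rule measure_pmf.prob_compl) simp
  ultimately show ?thesis by linarith
qed

lemma prob_marginal_l1_error_le:
  assumes delta: "0 < delta" and N: "1 \<le> N" and eps: "0 < eps" "eps < 2" and beta: "beta \<subseteq> {..<d}"
  shows "1 - delta \<le> measure_pmf.prob (inprs_reports d eps N x)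
           {R. marg_l1 beta (marginal d beta (full_dist N x)) (marginal d beta (inprs_recon eps N R))
               \<le> 4 / delta * 2 powr ((real d + real (card beta)) / 2) / (eps * sqrt N)}"
proof -
  define W where "W = 2 powr ((real d + real (card beta)) / 2) / (eps * sqrt N)"
  define L where "L R = marg_l1 beta (marginal d beta (full_dist N x)) (marginal d beta (inprs_recon eps N R))"
    for R
  have W: "0 < W" unfolding W_def using N eps by simp
  have "measure_pmf.expectation (inprs_reports d eps N x) L \<le> 4 * W"
    unfolding L_def W_def using expectation_marginal_l1_error_le[OF N eps beta] by simp
  hence "measure_pmf.expectation (inprs_reports d eps N x) L / (4 / delta * W) \<le> 4 * W / (4 / delta * W)"
    using W delta by (intro divide_right_mono) auto
  also have "\<dots> = delta" using W delta by simp
  finally have "1 - delta \<le> 1 - measure_pmf.expectation (inprs_reports d eps N x) L / (4 / delta * W)"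
    by simp
  also have "\<dots> \<le> measure_pmf.prob (inprs_reports d eps N x) {R. L R \<le> 4 / delta * W}"
    using W delta
    by (intro Markov_prob_le_lower_bound finite_set_inprs_reports) (auto simp: L_def marg_l1_def)
  finally show ?thesis unfolding L_def W_def by simp
qed

lemma logfac_pos:
  assumes "0 < eps"
  shows "0 < logfac N d k eps"
proof -
  have "1 < 3 + real N + real d + real k + 1 / eps" using assms by (simp add: add_pos_nonneg)
  thus ?thesis unfolding logfac_def by simp
qed

theorem theorem2:
  shows "(\<forall>(d::nat) (eps::real). eps > 0 \<longrightarrow> eps_LDP eps (Pow {..<d}) (inprs_local d eps))
    \<and> (\<forall>(c0::real) (b::real) (delta::real). c0 > 0 \<longrightarrow> 0 < delta \<longrightarrow> delta < 1 \<longrightarrow>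
         (\<exists>(C::real) (a::real). C > 0 \<and>
           (\<forall>(N::nat) (d::nat) (beta::nat set) (eps::real) (x::nat \<Rightarrow> nat set).
              N \<ge> 1 \<longrightarrow> 0 < eps \<longrightarrow> eps < 2 \<longrightarrow> beta \<subseteq> {..<d} \<longrightarrow>
              (\<forall>i<N. x i \<subseteq> {..<d}) \<longrightarrow>
              real N * logfac N d (card beta) eps powr b \<ge> c0 * 2 ^ d \<longrightarrow>
              measure_pmf.prob (inprs_reports d eps N x)
                {R. marg_l1 beta (marginal d beta (full_dist N x))
                                 (marginal d beta (inprs_recon eps N R))
                    \<le> C * logfac N d (card beta) eps powr a
                        * 2 powr ((real d + real (card beta)) / 2) / (eps * sqrt (real N))}
              \<ge> 1 - delta)))"
  apply (intro conjI allI impI)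
  subgoal by (rule inprs_local_eps_LDP)
  subgoal for c0 b delta
    by (rule exI[of _ "4 / delta"], rule exI[of _ 0], intro conjI allI impI)
      (simp_all add: logfac_pos[THEN less_imp_not_eq2] prob_marginal_l1_error_le[simplified])
  done

end
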